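(* Let $f\in\mathcal{C}(2\pi)$ with modulus of continuity $\omega_f$. Then for every integer $n\ge2$, $$E^\alpha_{nn}(f;[-\pi,\pi])\le\frac{1+|\alpha|_\infty(\|Id-L\|-1)}{1-|\alpha|_\infty}\,2\,\omega_f\Big(\frac{2\pi\sqrt3}{n+2}\Big)+\frac{|\alpha|_\infty}{1-|\alpha|_\infty}\|Id-L\|\,\|f\|_\infty.$$
   Context: Let $I=[x_0,x_N]=[-\pi,\pi]$, $N\ge2$, $\Delta=\{x_0<x_1<\dots<x_N\}$, $I_i=[x_{i-1},x_i]$, and $L_i(x)=a_ix+b_i$ the affine map of $I$ onto $I_i$ with $L_i(x_0)=x_{i-1}$, $L_i(x_N)=x_i$; $\alpha\in(-1,1)^N$, $|\alpha|_\infty=\max_i|\alpha_i|$. For $f,b$ continuous with $b(x_0)=f(x_0)$, $b(x_N)=f(x_N)$, $f^\alpha_{\Delta,b}$ is the unique continuous $g$ with $g(x)=f(x)+\alpha_i(g-b)(L_i^{-1}(x))$ for $x\in I_i$. $L:\mathcal{C}(2\pi)\to\mathcal{C}(2\pi)$ is bounded linear with $(Lf)(x_0)=f(x_0)$, $(Lf)(x_N)=f(x_N)$, and $\mathcal{F}^\alpha_{\Delta,L}(f)=f^\alpha_{\Delta,Lf}$. $\mathcal{C}(2\pi)=\{f\in\mathcal{C}([-\pi,\pi]):f(-\pi)=f(\pi)\}$ with sup norm; $\mathfrak{T}_m$ = real trigonometric polynomials of degree $\le m$; $\mathfrak{R}_{mn}(2\pi)=\{p/q:p\in\mathfrak{T}_m,q\in\mathfrak{T}_n,q>0\text{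 on }[-\pi,\pi]\}$; $\mathfrak{R}^\alpha_{mn}(2\pi)=\mathcal{F}^\alpha_{\Delta,L}(\mathfrak{R}_{mn}(2\pi))$; $E^\alpha_{mn}(f;[-\pi,\pi])=\inf\{\|f-r^\alpha\|_\infty:r^\alpha\in\mathfrak{R}^\alpha_{mn}(2\pi)\}$. The modulus of continuity is $\omega_f(\delta)=\sup\{|f(x)-f(y)|:x,y\in[-\pi,\pi],|x-y|\le\delta\}$. *)

theory Defs
  imports "HOL-Analysis.Analysis"
begin

text \<open>All functions are real-valued functions on the reals, considered on the
interval I = [-pi, pi]; only their values on I matter.\<close>

definition Ipi :: "real set" where
  "Ipi = {-pi..pi}"

definition C2pi :: "(real \<Rightarrow> real) set" where
  "C2pi = {f. continuous_on {-pi..pi} f \<and> f (-pi) = f pi}"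

definition supn :: "(real \<Rightarrow> real) \<Rightarrow> real" where
  "supn g = Sup ((\<lambda>x. \<bar>g x\<bar>) ` {-pi..pi})"

definition modcont :: "(real \<Rightarrow> real) \<Rightarrow> real \<Rightarrow> real" where
  "modcont f \<delta> = Sup {\<bar>f x - f y\<bar> | x y. x \<in> {-pi..pi} \<and> y \<in> {-pi..pi} \<and> \<bar>x - y\<bar> \<le> \<delta>}"

definition partition_pi :: "nat \<Rightarrow> (nat \<Rightarrow> real) \<Rightarrow> bool" where
  "partition_pi N xs \<longleftrightarrow> xs 0 = -pi \<and> xs N = pi \<and> (\<forall>i<N. xs i < xs (Suc i))"

text \<open>Inverse of the affine map L_i of [x_0,x_N] onto [x_(i-1), x_i].\<close>
definition Linv :: "(nat \<Rightarrow> real) \<Rightarrow> nat \<Rightarrow> real \<Rightarrow> real" where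
  "Linv xs i y = -pi + (y - xs (i - 1)) * (2 * pi) / (xs i - xs (i - 1))"

definition fractal_fun ::
  "nat \<Rightarrow> (nat \<Rightarrow> real) \<Rightarrow> (nat \<Rightarrow> real) \<Rightarrow> (real \<Rightarrow> real) \<Rightarrow> (real \<Rightarrow> real) \<Rightarrow> (real \<Rightarrow> real)" where
  "fractal_fun N xs \<alpha> b f = (THE g. continuous_on {-pi..pi} g
      \<and> (\<forall>x. x \<notin> {-pi..pi} \<longrightarrow> g x = 0)
      \<and> (\<forall>i\<in>{1..N}. \<forall>x\<in>{xs (i - 1)..xs i}.
            g x = f x + \<alpha> i * (g (Linv xs i x) - b (Linv xs i x))))"

definition fractal_op ::
  "nat \<Rightarrow> (nat \<Rightarrow> real) \<Rightarrow> (nat \<Rightarrow> real) \<Rightarrow> ((real \<Rightarrow> real) \<Rightarrow> (real \<Rightarrow> real)) \<Rightarrow> (real \<Rightarrow> real) \<Rightarrow> (real \<Rightarrow> real)" where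
  "fractal_op N xs \<alpha> L f = fractal_fun N xs \<alpha> (L f) f"

definition alpha_norm :: "nat \<Rightarrow> (nat \<Rightarrow> real) \<Rightarrow> real" where
  "alpha_norm N \<alpha> = Max ((\<lambda>i. \<bar>\<alpha> i\<bar>) ` {1..N})"

definition IdL_norm :: "((real \<Rightarrow> real) \<Rightarrow> (real \<Rightarrow> real)) \<Rightarrow> real" where
  "IdL_norm L = Sup {supn (\<lambda>x. f x - L f x) | f. f \<in> C2pi \<and> supn f \<le> 1}"

definition admissible_L :: "((real \<Rightarrow> real) \<Rightarrow> (real \<Rightarrow> real)) \<Rightarrow> bool" where
  "admissible_L L \<longleftrightarrow>
     (\<forall>f\<in>C2pi. L f \<in> C2pi)
   \<and> (\<forall>f\<in>C2pi. \<forall>g\<in>C2pi. \<forall>a b::real. \<forall>x\<in>{-pi..pi}.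
        L (\<lambda>t. a * f t + b * g t) x = a * L f x + b * L g x)
   \<and> (\<exists>B. \<forall>f\<in>C2pi. supn (L f) \<le> B * supn f)
   \<and> (\<forall>f\<in>C2pi. L f (-pi) = f (-pi) \<and> L f pi = f pi)"

definition trig_poly :: "nat \<Rightarrow> (real \<Rightarrow> real) set" where
  "trig_poly m = {p. \<exists>a b :: nat \<Rightarrow> real.
      p = (\<lambda>x. a 0 + (\<Sum>k=1..m. a k * cos (real k * x) + b k * sin (real k * x)))}"

definition trig_rat :: "nat \<Rightarrow> nat \<Rightarrow> (real \<Rightarrow> real) set" where
  "trig_rat m n = {(\<lambda>x. p x / q x) | p q. p \<in> trig_poly m \<and> q \<in> trig_poly n
                     \<and> (\<forall>x\<in>{-pi..pi}. q x > 0)}"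

definition E_alpha ::
  "nat \<Rightarrow> (nat \<Rightarrow> real) \<Rightarrow> (nat \<Rightarrow> real) \<Rightarrow> ((real \<Rightarrow> real) \<Rightarrow> (real \<Rightarrow> real))
    \<Rightarrow> nat \<Rightarrow> nat \<Rightarrow> (real \<Rightarrow> real) \<Rightarrow> real" where
  "E_alpha N xs \<alpha> L m n f =
     Inf {supn (\<lambda>x. f x - r\<alpha> x) | r\<alpha>. r\<alpha> \<in> fractal_op N xs \<alpha> L ` trig_rat m n}"

end

theory Submission
  imports Defs
begin

text \<open>Two estimates are combined. The first is Jackson's theorem in a discrete form. For
  \<open>M = 2m + 2\<close> equispaced nodes \<open>t\<^sub>j\<close> and the Jackson kernel \<open>J\<close>, the weights
  \<open>w\<^sub>j(x) = J(x - t\<^sub>j) / (M \<Sum>\<^sub>k a\<^sub>k\<^sup>2)\<close> form a partition of unity, by discrete orthogonality of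
  the \<open>exp (i k t\<^sub>j)\<close>, and their moment \<open>\<Sum>\<^sub>j w\<^sub>j(x) |sin ((x - t\<^sub>j)/2)|\<close> is at most \<open>1/(m+1)\<close>.
  Comparing the node values \<open>f(t\<^sub>j)\<close> with the linear interpolant of \<open>f\<close> at \<open>x\<close> costs
  \<open>\<omega>(h)/h\<close> times the circular distance, which is at most \<open>\<pi> |sin ((x - t\<^sub>j)/2)|\<close>; hence the
  trigonometric polynomial \<open>\<Sum>\<^sub>j f(t\<^sub>j) w\<^sub>j\<close> of degree \<open>2m \<le> n\<close> is within
  \<open>2 \<omega>(2\<pi>\<surd>3/(n+2))\<close> of \<open>f\<close>.

  The second is the perturbation estimate for fractal functions: \<open>f\<^sup>\<alpha>\<^sub>\<Delta>\<^sub>,\<^sub>b\<close> is the fixed point of a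
  contraction with constant \<open>|\<alpha>|\<^sub>\<infinity>\<close>, so it lies within \<open>|\<alpha>|\<^sub>\<infinity>/(1 - |\<alpha>|\<^sub>\<infinity>) \<parallel>f - b\<parallel>\<close> of \<open>f\<close>.
  For the polynomial \<open>p\<close> above, viewed as a rational function with denominator 1, and
  \<open>b = L p\<close> with \<open>\<parallel>p - L p\<parallel> \<le> \<parallel>Id - L\<parallel> (\<parallel>f\<parallel> + 2\<omega>)\<close>, this gives the bound.\<close>

lemma bdd_above_abs_image:
  fixes u :: "real \<Rightarrow> real"
  assumes "continuous_on {-pi..pi} u"
  shows "bdd_above ((\<lambda>x. \<bar>u x\<bar>) ` {-pi..pi})"
proof -
  have "bounded (u ` {-pi..pi})"
    by (intro compact_imp_bounded compact_continuous_image assms) simp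
  then obtain B where "\<forall>y\<in>u ` {-pi..pi}. norm y \<le> B" by (auto simp: bounded_iff)
  then show ?thesis unfolding bdd_above_def by auto
qed

lemma abs_le_supn:
  assumes "continuous_on {-pi..pi} u" "x \<in> {-pi..pi}"
  shows "\<bar>u x\<bar> \<le> supn u"
  unfolding supn_def using bdd_above_abs_image[OF assms(1)] assms(2) by (intro cSUP_upper) auto

lemma supn_leI:
  assumes "\<And>x. x \<in> {-pi..pi} \<Longrightarrow> \<bar>u x\<bar> \<le> c"
  shows "supn u \<le> c"
  unfolding supn_def using assms by (intro cSUP_least) auto

lemma supn_nonneg:
  assumes "continuous_on {-pi..pi} u"
  shows "0 \<le> supn u"
  using abs_le_supn[OF assms, of 0] by (simp add: less_imp_le)

lemma abs_diff_le_modcont: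
  assumes "continuous_on {-pi..pi} f" "x \<in> {-pi..pi}" "y \<in> {-pi..pi}" "\<bar>x - y\<bar> \<le> d"
  shows "\<bar>f x - f y\<bar> \<le> modcont f d"
proof -
  have "bdd_above {\<bar>f x - f y\<bar> | x y. x \<in> {-pi..pi} \<and> y \<in> {-pi..pi} \<and> \<bar>x - y\<bar> \<le> d}"
    unfolding bdd_above_def
  proof (intro exI[of _ "2 * supn f"] ballI)
    fix z assume "z \<in> {\<bar>f x - f y\<bar> | x y. x \<in> {-pi..pi} \<and> y \<in> {-pi..pi} \<and> \<bar>x - y\<bar> \<le> d}"
    then obtain x y where "z = \<bar>f x - f y\<bar>" "x \<in> {-pi..pi}" "y \<in> {-pi..pi}" by auto
    with abs_le_supn[OF assms(1), of x] abs_le_supn[OF assms(1), of y] show "z \<le> 2 * supn f"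
      by linarith
  qed
  then show ?thesis unfolding modcont_def using assms by (intro cSup_upper) auto
qed

lemma modcont_nonneg:
  assumes "continuous_on {-pi..pi} f" "0 \<le> d"
  shows "0 \<le> modcont f d"
  using abs_diff_le_modcont[OF assms(1), of 0 0 d] assms(2) by simp

lemma trig_polyE:
  assumes "p \<in> trig_poly m"
  obtains a b where "p = (\<lambda>x. a 0 + (\<Sum>k=1..m. a k * cos (real k * x) + b k * sin (real k * x)))"
  using assms unfolding trig_poly_def by auto

lemma trig_poly_0: "(\<lambda>x. 0) \<in> trig_poly m"
  unfolding trig_poly_def by (intro CollectI exI[of _ "\<lambda>_. 0"]) simp

lemma trig_poly_add:
  assumes "p \<in> trig_poly m" "q \<in> trig_poly m"
  shows "(\<lambda>x. p x + q x) \<in> trig_poly m"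
proof -
  obtain a b where p: "p = (\<lambda>x. a 0 + (\<Sum>k=1..m. a k * cos (real k * x) + b k * sin (real k * x)))"
    using assms(1) by (rule trig_polyE)
  obtain c d where q: "q = (\<lambda>x. c 0 + (\<Sum>k=1..m. c k * cos (real k * x) + d k * sin (real k * x)))"
    using assms(2) by (rule trig_polyE)
  show ?thesis unfolding trig_poly_def
    by (intro CollectI exI[of _ "\<lambda>k. a k + c k"] exI[of _ "\<lambda>k. b k + d k"])
       (auto simp: p q sum.distrib[symmetric] algebra_simps)
qed

lemma trig_poly_cmult:
  assumes "p \<in> trig_poly m"
  shows "(\<lambda>x. c * p x) \<in> trig_poly m"
proof -
  obtain a b where p: "p = (\<lambda>x. a 0 + (\<Sum>k=1..m. a k * cos (real k * x) + b k * sin (real k * x)))"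
    using assms by (rule trig_polyE)
  show ?thesis unfolding trig_poly_def
    by (intro CollectI exI[of _ "\<lambda>k. c * a k"] exI[of _ "\<lambda>k. c * b k"])
       (auto simp: p sum_distrib_left algebra_simps)
qed

lemma trig_poly_sum:
  assumes "finite A" "\<And>i. i \<in> A \<Longrightarrow> F i \<in> trig_poly m"
  shows "(\<lambda>x. \<Sum>i\<in>A. F i x) \<in> trig_poly m"
  using assms by (induction A rule: finite_induct) (simp_all add: trig_poly_0 trig_poly_add)

lemma trig_poly_cos:
  assumes "k \<le> m"
  shows "(\<lambda>x. cos (real k * x)) \<in> trig_poly m"
proof -
  have "(\<Sum>j=1..m. (if j = k then 1 else 0) * cos (real j * x) + 0 * sin (real j * x))
      = (\<Sum>j\<in>{1..m}. if j = k then cos (real j * x) else 0)" for x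
    by (intro sum.cong) auto
  then show ?thesis unfolding trig_poly_def
    using assms by (intro CollectI exI[of _ "\<lambda>j. if j = k then 1 else 0"] exI[of _ "\<lambda>_. 0"])
                   (cases "k = 0"; auto simp: sum.delta)
qed

lemma trig_poly_sin:
  assumes "k \<le> m"
  shows "(\<lambda>x. sin (real k * x)) \<in> trig_poly m"
proof -
  have "(\<Sum>j=1..m. 0 * cos (real j * x) + (if j = k then 1 else 0) * sin (real j * x))
      = (\<Sum>j\<in>{1..m}. if j = k then sin (real j * x) else 0)" for x
    by (intro sum.cong) auto
  then show ?thesis unfolding trig_poly_def
    using assms by (intro CollectI exI[of _ "\<lambda>_. 0"] exI[of _ "\<lambda>j. if j = k then 1 else 0"])
                   (cases "k = 0"; auto simp: sum.delta)
qed

lemma trig_poly_1: "(\<lambda>x. 1) \<in> trig_poly m"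
  using trig_poly_cos[of 0 m] by simp

lemma trig_poly_cos_shift:
  fixes k l :: nat
  assumes "k \<le> m" "l \<le> m"
  shows "(\<lambda>x. cos ((real k - real l) * (x - t))) \<in> trig_poly m"
proof -
  have cos_sin_int: "(\<lambda>x. cos (real_of_int d * x)) \<in> trig_poly m \<and> (\<lambda>x. sin (real_of_int d * x)) \<in> trig_poly m"
    if "\<bar>d\<bar> \<le> int m" for d :: int
  proof (cases "0 \<le> d")
    case True
    then show ?thesis using that trig_poly_cos[of "nat d" m] trig_poly_sin[of "nat d" m] by simp
  next
    case False
    have "(\<lambda>x. -1 * sin (real (nat (- d)) * x)) \<in> trig_poly m"
      using False that by (intro trig_poly_cmult trig_poly_sin) simp
    then show ?thesis using False that trig_poly_cos[of "nat (- d)" m] by simp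
  qed
  define d where "d = int k - int l"
  have "\<bar>d\<bar> \<le> int m" using assms by (simp add: d_def)
  moreover have "cos ((real k - real l) * (x - t)) =
      cos (of_int d * t) * cos (of_int d * x) + sin (of_int d * t) * sin (of_int d * x)" for x
  proof -
    have "(real k - real l) * (x - t) = of_int d * x - of_int d * t"
      by (simp add: d_def algebra_simps)
    then show ?thesis by (metis cos_diff mult.commute add.commute)
  qed
  ultimately show ?thesis using cos_sin_int by (simp add: trig_poly_add trig_poly_cmult)
qed

lemma continuous_on_trig_poly:
  assumes "p \<in> trig_poly m"
  shows "continuous_on S p"
  using assms by (elim trig_polyE) (simp add: continuous_intros)

lemma trig_poly_periodic:
  assumes "p \<in> trig_poly m"
  shows "p (-pi) = p pi"
proof -
  have "sin (real k * pi) = 0" for k :: nat by (simp add: sin_zero_iff_int2)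
  then show ?thesis using assms by (elim trig_polyE) simp
qed

lemma trig_poly_in_trig_rat:
  assumes "p \<in> trig_poly m"
  shows "p \<in> trig_rat m n"
  unfolding trig_rat_def using assms trig_poly_1[of n]
  by (intro CollectI exI[of _ p] exI[of _ "\<lambda>x. 1"]) auto

lemma trig_rat_in_C2pi:
  assumes "r \<in> trig_rat m n"
  shows "r \<in> C2pi"
proof -
  obtain p q where r: "r = (\<lambda>x. p x / q x)" and p: "p \<in> trig_poly m" and q: "q \<in> trig_poly n"
    and q_pos: "\<forall>x\<in>{-pi..pi}. q x > 0"
    using assms unfolding trig_rat_def by blast
  have "continuous_on {-pi..pi} r"
    unfolding r using q_pos continuous_on_trig_poly[OF p] continuous_on_trig_poly[OF q]
    by (intro continuous_on_divide) auto
  then show ?thesis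
    unfolding C2pi_def using trig_poly_periodic[OF p] trig_poly_periodic[OF q] r by simp
qed


section \<open>The discrete Jackson operator\<close>

definition equi_node :: "nat \<Rightarrow> nat \<Rightarrow> real" where
  "equi_node M j = -pi + real j * (2 * pi / real M)"

lemma sum_cos_equi_nodes:
  fixes d :: int
  assumes "M > 0" "\<bar>d\<bar> < int M"
  shows "(\<Sum>j<M. cos (of_int d * (x - equi_node M j))) = (if d = 0 then real M else 0)"
proof (cases "d = 0")
  case False
  define \<theta> where "\<theta> = 2 * pi * of_int d / real M"
  define z where "z = cis (- \<theta>)"
  have cos_eq: "cos (of_int d * (x - equi_node M j)) = Re (cis (of_int d * (x + pi)) * z ^ j)" for j
  proof -
    have "of_int d * (x - equi_node M j) = of_int d * (x + pi) + real j * (- \<theta>)"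
      unfolding equi_node_def \<theta>_def using assms(1) by (simp add: field_simps)
    then have "cis (of_int d * (x + pi)) * z ^ j = cis (of_int d * (x - equi_node M j))"
      unfolding z_def Complex.DeMoivre cis_mult by simp
    then show ?thesis by (metis cis.sel(1))
  qed
  have "z \<noteq> 1"
  proof
    assume "z = 1"
    then have "cos (- \<theta>) = 1" unfolding z_def by (metis cis.sel(1) one_complex.sel(1))
    then obtain k :: int where "- \<theta> = of_int k * 2 * pi" using cos_one_2pi_int by blast
    then have "pi * (- of_int d) = pi * (of_int k * real M)" unfolding \<theta>_def using assms(1)
      by (simp add: field_simps)
    then have "- of_int d = of_int k * real M" by (metis mult_cancel_left pi_neq_zero)
    then have "- d = k * int M" by (metis of_int_eq_iff of_int_mult of_int_of_nat_eq of_int_minus)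
    then have "\<bar>d\<bar> = \<bar>k\<bar> * int M" by (metis abs_minus_cancel abs_mult abs_of_nat)
    moreover have "k \<noteq> 0" using False \<open>- d = k * int M\<close> by auto
    then have "1 \<le> \<bar>k\<bar>" by linarith
    ultimately have "int M \<le> \<bar>d\<bar>" using mult_right_mono[of 1 "\<bar>k\<bar>" "int M"] by simp
    with assms(2) show False by simp
  qed
  moreover have "z ^ M = 1"
  proof -
    have "z ^ M = cis (2 * pi * of_int (- d))"
      unfolding z_def Complex.DeMoivre \<theta>_def using assms(1) by simp
    also have "\<dots> = 1" by (rule cis_multiple_2pi) simp
    finally show ?thesis .
  qed
  ultimately have "(\<Sum>j<M. z ^ j) = 0" using geometric_sum[of z M] by simp
  moreover have "(\<Sum>j<M. cos (of_int d * (x - equi_node M j)))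
      = Re (cis (of_int d * (x + pi)) * (\<Sum>j<M. z ^ j))"
    by (simp add: cos_eq sum_distrib_left)
  ultimately show ?thesis using False by simp
qed simp

text \<open>With the triangular coefficients \<open>a\<^sub>k\<close>, the kernel is
  \<open>|\<Sum>k\<le>2m. a\<^sub>k e\<^sup>i\<^sup>k\<^sup>u|\<^sup>2 = |\<Sum>j\<le>m. e\<^sup>i\<^sup>j\<^sup>u|\<^sup>4\<close>, a multiple of the squared Fej\'er kernel.\<close>

definition jackson_coeff :: "nat \<Rightarrow> nat \<Rightarrow> real" where
  "jackson_coeff m k = real (min (k + 1) (2 * m + 1 - k))"

definition jackson_kernel :: "nat \<Rightarrow> real \<Rightarrow> real" where
  "jackson_kernel m u = (\<Sum>k\<le>2*m. jackson_coeff m k * cos (real k * u))\<^sup>2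
                      + (\<Sum>k\<le>2*m. jackson_coeff m k * sin (real k * u))\<^sup>2"

definition jackson_energy :: "nat \<Rightarrow> real" where
  "jackson_energy m = (\<Sum>k\<le>2*m. (jackson_coeff m k)\<^sup>2)"

definition jackson_autocorr :: "nat \<Rightarrow> real" where
  "jackson_autocorr m = (\<Sum>k<2*m. jackson_coeff m k * jackson_coeff m (Suc k))"

lemma jackson_kernel_nonneg: "0 \<le> jackson_kernel m u"
  unfolding jackson_kernel_def by simp

lemma jackson_kernel_eq_cos_sum:
  "jackson_kernel m u =
     (\<Sum>k\<le>2*m. \<Sum>l\<le>2*m. jackson_coeff m k * jackson_coeff m l * cos ((real k - real l) * u))"
proof -
  have "cos ((real k - real l) * u) = cos (real k * u) * cos (real l * u) + sin (real k * u) * sin (real l * u)"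
    for k l
    by (simp add: left_diff_distrib cos_diff)
  then show ?thesis
    unfolding jackson_kernel_def power2_eq_square sum_product sum.distrib[symmetric]
    by (simp add: algebra_simps)
qed

lemma trig_poly_jackson_kernel:
  assumes "2 * m \<le> n"
  shows "(\<lambda>x. jackson_kernel m (x - t)) \<in> trig_poly n"
  unfolding jackson_kernel_eq_cos_sum
  using assms by (intro trig_poly_sum trig_poly_cmult trig_poly_cos_shift) auto

lemma sum_jackson_coeff: "(\<Sum>k\<le>2*m. jackson_coeff m k) = (real m + 1)\<^sup>2"
proof -
  have gauss: "(\<Sum>k<n. real (k + 1)) = real n * (real n + 1) / 2" for n
    by (induction n) (simp_all add: field_simps)
  have "{..2*m} = {..<Suc m} \<union> (\<lambda>i. m + 1 + i) ` {..<m}"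
  proof (intro subset_antisym subsetI)
    fix k assume "k \<in> {..2*m}"
    then show "k \<in> {..<Suc m} \<union> (\<lambda>i. m + 1 + i) ` {..<m}"
      by (cases "k \<le> m") (auto intro!: image_eqI[of _ _ "k - Suc m"])
  qed auto
  then have "(\<Sum>k\<le>2*m. jackson_coeff m k)
      = (\<Sum>k<Suc m. jackson_coeff m k) + (\<Sum>i<m. jackson_coeff m (m + 1 + i))"
    by (simp only:) (subst sum.union_disjoint; auto simp: sum.reindex inj_on_def simp del: lessThan_Suc)
  also have "(\<Sum>k<Suc m. jackson_coeff m k) = (\<Sum>k<Suc m. real (k + 1))"
    by (intro sum.cong) (auto simp: jackson_coeff_def)
  also have "(\<Sum>i<m. jackson_coeff m (m + 1 + i)) = (\<Sum>i<m. real (m - Suc i + 1))"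
    by (intro sum.cong) (auto simp: jackson_coeff_def)
  also have "\<dots> = (\<Sum>i<m. real (i + 1))"
    by (rule sum.nat_diff_reindex[where g = "\<lambda>i. real (i + 1)"])
  finally show ?thesis unfolding gauss by (simp add: field_simps power2_eq_square)
qed

lemma sum_diff_Suc_squared:
  fixes a :: "nat \<Rightarrow> real"
  shows "(\<Sum>k<n. (a (Suc k) - a k)\<^sup>2)
       = 2 * (\<Sum>k\<le>n. (a k)\<^sup>2) - (a 0)\<^sup>2 - (a n)\<^sup>2 - 2 * (\<Sum>k<n. a k * a (Suc k))"
  by (induction n) (simp_all add: power2_eq_square algebra_simps)

lemma jackson_energy_minus_autocorr: "jackson_energy m - jackson_autocorr m = real m + 1"
proof -
  have "(jackson_coeff m (Suc k) - jackson_coeff m k)\<^sup>2 = 1" if "k < 2 * m" for k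
    using that by (cases "k < m") (auto simp: jackson_coeff_def of_nat_diff)
  then have "(\<Sum>k<2*m. (jackson_coeff m (Suc k) - jackson_coeff m k)\<^sup>2) = 2 * real m"
    by simp
  moreover have "jackson_coeff m 0 = 1" "jackson_coeff m (2 * m) = 1"
    by (auto simp: jackson_coeff_def)
  ultimately show ?thesis
    using sum_diff_Suc_squared[of "jackson_coeff m" "2 * m"]
    unfolding jackson_energy_def jackson_autocorr_def by simp
qed

lemma jackson_energy_lower_bound: "(real m + 1) ^ 4 \<le> (2 * real m + 1) * jackson_energy m"
proof -
  have "(\<Sum>k\<le>2*m. jackson_coeff m k)\<^sup>2 \<le> jackson_energy m * real (card {..2*m})"
    unfolding jackson_energy_def by (rule sum_squared_le_sum_of_squares)
  then show ?thesis unfolding sum_jackson_coeff by (simp add: algebra_simps)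
qed

lemma jackson_energy_pos: "0 < jackson_energy m"
  using jackson_energy_lower_bound[of m]
  by (smt (verit) of_nat_0_le_iff zero_le_power zero_less_mult_iff zero_less_power)

lemma sum_atMost_if_Suc_le:
  fixes f :: "nat \<Rightarrow> real"
  shows "(\<Sum>k\<le>n. if Suc k \<le> n then f k else 0) = (\<Sum>k<n. f k)"
proof -
  have "{k\<in>{..n}. Suc k \<le> n} = {..<n}" by auto
  then show ?thesis by (simp add: sum.inter_filter[symmetric])
qed

lemma sum_cos_diff_equi_nodes:
  assumes "k \<le> 2*m" "l \<le> 2*m" "\<bar>e\<bar> \<le> 1"
  shows "(\<Sum>j<2*m+2. cos (of_int (int k - int l + e) * (x - equi_node (2*m+2) j)))
       = (if int k - int l + e = 0 then real (2*m+2) else 0)"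
  using assms by (intro sum_cos_equi_nodes) auto

lemma sum_jackson_kernel_equi_nodes:
  "(\<Sum>j<2*m+2. jackson_kernel m (x - equi_node (2*m+2) j)) = real (2*m+2) * jackson_energy m"
proof -
  define M where "M = 2*m+2"
  define A where "A k l = jackson_coeff m k * jackson_coeff m l" for k l
  have "(\<Sum>j<M. jackson_kernel m (x - equi_node M j)) =
        (\<Sum>j<M. \<Sum>k\<le>2*m. \<Sum>l\<le>2*m. A k l * cos ((real k - real l) * (x - equi_node M j)))"
    unfolding jackson_kernel_eq_cos_sum A_def ..
  also have "\<dots> = (\<Sum>k\<le>2*m. \<Sum>j<M. \<Sum>l\<le>2*m. A k l * cos ((real k - real l) * (x - equi_node M j)))"
    by (rule sum.swap)
  also have "\<dots> = (\<Sum>k\<le>2*m. \<Sum>l\<le>2*m. \<Sum>j<M. A k l * cos ((real k - real l) * (x - equi_node M j)))"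
    by (intro sum.cong refl sum.swap)
  also have "\<dots> = (\<Sum>k\<le>2*m. \<Sum>l\<le>2*m. if l = k then A k l * real M else 0)"
  proof (intro sum.cong refl)
    fix k l assume "k \<in> {..2*m}" "l \<in> {..2*m}"
    then have "(\<Sum>j<M. cos (of_int (int k - int l + 0) * (x - equi_node M j)))
        = (if int k - int l + 0 = 0 then real M else 0)"
      unfolding M_def by (intro sum_cos_diff_equi_nodes) auto
    then show "(\<Sum>j<M. A k l * cos ((real k - real l) * (x - equi_node M j)))
        = (if l = k then A k l * real M else 0)"
      by (simp add: sum_distrib_left[symmetric])
  qed
  also have "\<dots> = real M * jackson_energy m"
    by (simp add: sum.delta jackson_energy_def A_def sum_distrib_left power2_eq_square mult.commute)
  finally show ?thesis unfolding M_def .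
qed

lemma sum_cos_mult_jackson_kernel_equi_nodes:
  "(\<Sum>j<2*m+2. cos (x - equi_node (2*m+2) j) * jackson_kernel m (x - equi_node (2*m+2) j))
     = real (2*m+2) * jackson_autocorr m"
proof -
  define M where "M = 2*m+2"
  define A where "A k l = jackson_coeff m k * jackson_coeff m l" for k l
  define C where "C k l j = cos (x - equi_node M j) * cos ((real k - real l) * (x - equi_node M j))" for k l j
  have prod_to_sum: "cos u * cos ((real k - real l) * u) =
      (cos (of_int (int k - int l + -1) * u) + cos (of_int (int k - int l + 1) * u)) / 2" for u k l
    using cos_times_cos[of "(real k - real l) * u" u] by (simp add: algebra_simps)
  have "(\<Sum>j<M. cos (x - equi_node M j) * jackson_kernel m (x - equi_node M j)) =
        (\<Sum>j<M. \<Sum>k\<le>2*m. \<Sum>l\<le>2*m. A k l * C k l j)"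
    unfolding jackson_kernel_eq_cos_sum A_def C_def by (simp add: sum_distrib_left algebra_simps)
  also have "\<dots> = (\<Sum>k\<le>2*m. \<Sum>j<M. \<Sum>l\<le>2*m. A k l * C k l j)"
    by (rule sum.swap)
  also have "\<dots> = (\<Sum>k\<le>2*m. \<Sum>l\<le>2*m. \<Sum>j<M. A k l * C k l j)"
    by (intro sum.cong refl sum.swap)
  also have "\<dots> = (\<Sum>k\<le>2*m. \<Sum>l\<le>2*m. real M / 2 *
                      ((if k = Suc l then A k l else 0) + (if l = Suc k then A k l else 0)))"
  proof (intro sum.cong refl)
    fix k l assume "k \<in> {..2*m}" "l \<in> {..2*m}"
    then have node_sum: "(\<Sum>j<M. cos (of_int (int k - int l + e) * (x - equi_node M j)))
        = (if int k - int l + e = 0 then real M else 0)" if "\<bar>e\<bar> \<le> 1" for e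
      unfolding M_def using that by (intro sum_cos_diff_equi_nodes) auto
    have "(\<Sum>j<M. A k l * C k l j)
        = A k l * ((\<Sum>j<M. cos (of_int (int k - int l + -1) * (x - equi_node M j)))
                 + (\<Sum>j<M. cos (of_int (int k - int l + 1) * (x - equi_node M j)))) / 2"
      unfolding C_def prod_to_sum
      by (simp add: sum_distrib_left sum.distrib sum_divide_distrib[symmetric] algebra_simps)
    also have "\<dots> = real M / 2 * ((if k = Suc l then A k l else 0) + (if l = Suc k then A k l else 0))"
    proof -
      have minus: "(\<Sum>j<M. cos (of_int (int k - int l + -1) * (x - equi_node M j)))
          = (if int k - int l + -1 = 0 then real M else 0)" by (rule node_sum) simp
      have plus: "(\<Sum>j<M. cos (of_int (int k - int l + 1) * (x - equi_node M j)))
          = (if int k - int l + 1 = 0 then real M else 0)" by (rule node_sum) simp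
      show ?thesis unfolding minus plus by auto
    qed
    finally show "(\<Sum>j<M. A k l * C k l j)
        = real M / 2 * ((if k = Suc l then A k l else 0) + (if l = Suc k then A k l else 0))" .
  qed
  also have "\<dots> = real M / 2 * ((\<Sum>k\<le>2*m. \<Sum>l\<le>2*m. if k = Suc l then A k l else 0)
                              + (\<Sum>k\<le>2*m. \<Sum>l\<le>2*m. if l = Suc k then A k l else 0))"
    by (simp only: sum_distrib_left[symmetric] sum.distrib)
  also have "(\<Sum>k\<le>2*m. \<Sum>l\<le>2*m. if k = Suc l then A k l else 0) = jackson_autocorr m"
    by (subst sum.swap) (simp add: sum.delta' sum_atMost_if_Suc_le jackson_autocorr_def A_def mult.commute)
  also have "(\<Sum>k\<le>2*m. \<Sum>l\<le>2*m. if l = Suc k then A k l else 0) = jackson_autocorr m"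
    by (simp add: sum.delta' sum_atMost_if_Suc_le jackson_autocorr_def A_def)
  finally show ?thesis unfolding M_def by simp
qed


definition jackson_weight :: "nat \<Rightarrow> nat \<Rightarrow> real \<Rightarrow> real" where
  "jackson_weight m j x =
     jackson_kernel m (x - equi_node (2*m+2) j) / (real (2*m+2) * jackson_energy m)"

lemma jackson_weight_nonneg: "0 \<le> jackson_weight m j x"
  unfolding jackson_weight_def using jackson_kernel_nonneg jackson_energy_pos[of m] by simp

lemma sum_jackson_weight: "(\<Sum>j<2*m+2. jackson_weight m j x) = 1"
  unfolding jackson_weight_def using sum_jackson_kernel_equi_nodes[of m x] jackson_energy_pos[of m]
  by (simp add: sum_divide_distrib[symmetric])

lemma jackson_weight_sin_sq_moment:
  "(\<Sum>j<2*m+2. jackson_weight m j x * (sin ((x - equi_node (2*m+2) j) / 2))\<^sup>2) \<le> 1 / (real m + 1)\<^sup>2"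
proof -
  define M where "M = 2*m+2"
  define E where "E = jackson_energy m"
  have E_pos: "0 < E" unfolding E_def by (rule jackson_energy_pos)
  have sin_sq: "(sin (u / 2))\<^sup>2 = (1 - cos u) / 2" for u :: real
    using cos_double_sin[of "u / 2"] by simp
  have "(\<Sum>j<M. jackson_weight m j x * (sin ((x - equi_node M j) / 2))\<^sup>2)
      = ((\<Sum>j<M. jackson_kernel m (x - equi_node M j))
          - (\<Sum>j<M. cos (x - equi_node M j) * jackson_kernel m (x - equi_node M j))) / (2 * (real M * E))"
    unfolding jackson_weight_def sin_sq M_def[symmetric] E_def[symmetric]
    by (simp add: sum_divide_distrib[symmetric] sum_subtractf[symmetric] algebra_simps)
  also have "\<dots> = (real M * E - real M * jackson_autocorr m) / (2 * (real M * E))"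
    unfolding M_def E_def sum_jackson_kernel_equi_nodes sum_cos_mult_jackson_kernel_equi_nodes ..
  also have "\<dots> = (E - jackson_autocorr m) / (2 * E)"
    by (simp add: M_def flip: right_diff_distrib)
  also have "\<dots> = (real m + 1) / (2 * E)"
    unfolding E_def jackson_energy_minus_autocorr ..
  also have "\<dots> \<le> 1 / (real m + 1)\<^sup>2"
  proof -
    have "(2 * real m + 1) * E \<le> (2 * real m + 2) * E" using E_pos by simp
    then have "(real m + 1) * (real m + 1)\<^sup>2 * (real m + 1) \<le> 2 * E * (real m + 1)"
      using jackson_energy_lower_bound[of m] unfolding E_def by (simp add: algebra_simps power4_eq_xxxx power2_eq_square)
    then have "(real m + 1) * (real m + 1)\<^sup>2 \<le> 2 * E"
      by (simp add: mult_le_cancel_right)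
    then show ?thesis using E_pos by (simp add: field_simps)
  qed
  finally show ?thesis unfolding M_def .
qed

lemma jackson_weight_sin_moment:
  "(\<Sum>j<2*m+2. jackson_weight m j x * \<bar>sin ((x - equi_node (2*m+2) j) / 2)\<bar>) \<le> 1 / (real m + 1)"
proof -
  define M where "M = 2*m+2"
  define q where "q = real m + 1"
  have q_pos: "q > 0" by (simp add: q_def)
  have AM_GM: "\<bar>s\<bar> \<le> q / 2 * s\<^sup>2 + 1 / (2 * q)" for s
  proof -
    have "0 \<le> (q * \<bar>s\<bar> - 1)\<^sup>2" by simp
    then show ?thesis using q_pos by (simp add: field_simps power2_eq_square)
  qed
  have "(\<Sum>j<M. jackson_weight m j x * \<bar>sin ((x - equi_node M j) / 2)\<bar>)
     \<le> (\<Sum>j<M. jackson_weight m j x * (q / 2 * (sin ((x - equi_node M j) / 2))\<^sup>2 + 1 / (2 * q)))"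
    by (intro sum_mono mult_left_mono AM_GM jackson_weight_nonneg)
  also have "\<dots> = q / 2 * (\<Sum>j<M. jackson_weight m j x * (sin ((x - equi_node M j) / 2))\<^sup>2)
                 + 1 / (2 * q) * (\<Sum>j<M. jackson_weight m j x)"
    by (simp add: sum_distrib_left sum.distrib algebra_simps)
  also have "\<dots> \<le> q / 2 * (1 / q\<^sup>2) + 1 / (2 * q)"
  proof -
    have "(\<Sum>j<M. jackson_weight m j x * (sin ((x - equi_node M j) / 2))\<^sup>2) \<le> 1 / q\<^sup>2"
      using jackson_weight_sin_sq_moment[of m x] unfolding M_def q_def .
    moreover have "(\<Sum>j<M. jackson_weight m j x) = 1"
      using sum_jackson_weight[of m x] unfolding M_def .
    ultimately show ?thesis using q_pos mult_left_mono[of _ "1 / q\<^sup>2" "q / 2"] by simp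
  qed
  also have "\<dots> = 1 / q" using q_pos by (simp add: field_simps power2_eq_square)
  finally show ?thesis unfolding M_def q_def .
qed

section \<open>Jackson's theorem\<close>

lemma jordan_inequality:
  assumes "0 \<le> v" "v \<le> pi / 2"
  shows "2 * v / pi \<le> sin v"
proof -
  define g where "g v = 2 * v / pi - sin v" for v
  have "convex_on {0..pi} g"
  proof (rule convex_on_realI[where f' = "\<lambda>v. 2 / pi - cos v"])
    fix x assume "x \<in> {0..pi::real}"
    show "(g has_real_derivative 2 / pi - cos x) (at x)"
      unfolding g_def by (auto intro!: derivative_eq_intros)
  next
    fix x y :: real assume "x \<in> {0..pi}" "y \<in> {0..pi}" "x \<le> y"
    then show "2 / pi - cos x \<le> 2 / pi - cos y" using cos_monotone_0_pi_le[of x y] by auto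
  qed simp
  moreover define t where "t = 2 * v / pi"
  moreover have "0 \<le> t" "t \<le> 1" using assms pi_gt_zero by (auto simp: t_def field_simps)
  ultimately have "g ((1 - t) *\<^sub>R 0 + t *\<^sub>R (pi / 2)) \<le> (1 - t) * g 0 + t * g (pi / 2)"
    by (intro convex_onD) auto
  moreover have "(1 - t) *\<^sub>R 0 + t *\<^sub>R (pi / 2) = v" unfolding t_def by simp
  ultimately show ?thesis by (simp add: g_def t_def)
qed

definition circ_dist :: "real \<Rightarrow> real \<Rightarrow> real" where
  "circ_dist y c = min \<bar>y - c\<bar> (2 * pi - \<bar>y - c\<bar>)"

lemma circ_dist_commute: "circ_dist y c = circ_dist c y"
  unfolding circ_dist_def by (simp add: abs_minus_commute)

lemma circ_dist_le_pi_abs_sin: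
  assumes "x \<in> {-pi..pi}" "c \<in> {-pi..pi}"
  shows "circ_dist x c \<le> pi * \<bar>sin ((x - c) / 2)\<bar>"
proof -
  define v where "v = \<bar>x - c\<bar>"
  have v: "0 \<le> v" "v \<le> 2 * pi" using assms by (auto simp: v_def)
  have abs_sin: "\<bar>sin ((x - c) / 2)\<bar> = sin (v / 2)"
  proof (cases "0 \<le> x - c")
    case False
    then have "(x - c) / 2 = - (v / 2)" by (simp add: v_def field_simps)
    then show ?thesis using v sin_ge_zero[of "v / 2"] by simp
  qed (use v sin_ge_zero[of "v / 2"] in \<open>simp add: v_def\<close>)
  show ?thesis
  proof (cases "v \<le> pi")
    case True
    then have "v \<le> pi * sin (v / 2)" using v jordan_inequality[of "v / 2"] by (simp add: field_simps)
    then show ?thesis unfolding circ_dist_def abs_sin v_def[symmetric] by linarith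
  next
    case False
    define u where "u = 2 * pi - v"
    have "sin (v / 2) = sin (pi - u / 2)" by (simp add: u_def field_simps)
    then have "sin (v / 2) = sin (u / 2)" by simp
    moreover have "0 \<le> u" "u \<le> pi" using v False by (auto simp: u_def)
    ultimately have "u \<le> pi * sin (v / 2)" using jordan_inequality[of "u / 2"] by (simp add: field_simps)
    then show ?thesis unfolding circ_dist_def abs_sin v_def[symmetric] u_def by linarith
  qed
qed

lemma equi_node_mem:
  assumes "M > 0" "j \<le> M"
  shows "equi_node M j \<in> {-pi..pi}"
proof -
  have "real j * (2 * pi / real M) \<le> real M * (2 * pi / real M)"
    using assms by (intro mult_right_mono) auto
  then show ?thesis using assms unfolding equi_node_def by auto
qed

lemma equi_node_diff: "equi_node M b - equi_node M a = (real b - real a) * (2 * pi / real M)"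
  unfolding equi_node_def by (simp add: left_diff_distrib diff_divide_distrib)

lemma equi_node_mono:
  assumes "a \<le> b"
  shows "equi_node M a \<le> equi_node M b"
proof -
  have "0 \<le> (real b - real a) * (2 * pi / real M)" using assms by simp
  then show ?thesis using equi_node_diff[of M b a] by linarith
qed

lemma equi_node_bracket:
  assumes "M > 0" "x \<in> {-pi..pi}"
  obtains k where "k < M" "equi_node M k \<le> x" "x \<le> equi_node M (Suc k)"
proof -
  define h where "h = 2 * pi / real M"
  have h_pos: "h > 0" using assms(1) by (simp add: h_def)
  have node: "equi_node M i = -pi + real i * h" for i unfolding equi_node_def h_def ..
  define k where "k = min (nat \<lfloor>(x + pi) / h\<rfloor>) (M - 1)"
  have floor_nonneg: "0 \<le> \<lfloor>(x + pi) / h\<rfloor>" using assms(2) h_pos by auto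
  have "real k \<le> real (nat \<lfloor>(x + pi) / h\<rfloor>)" unfolding k_def by simp
  also have "\<dots> \<le> (x + pi) / h" using floor_nonneg of_int_floor_le[of "(x + pi) / h"] by simp
  finally have "real k \<le> (x + pi) / h" .
  then have "equi_node M k \<le> x" unfolding node using h_pos by (simp add: field_simps)
  moreover have "x \<le> equi_node M (Suc k)"
  proof (cases "nat \<lfloor>(x + pi) / h\<rfloor> \<le> M - 1")
    case True
    then have "(x + pi) / h \<le> real (Suc k)"
      unfolding k_def using floor_nonneg real_of_int_floor_add_one_ge[of "(x + pi) / h"]
      by (simp add: add.commute)
    then show ?thesis unfolding node using h_pos by (simp add: field_simps)
  next
    case False
    then have "Suc k = M" using assms(1) by (simp add: k_def)
    then show ?thesis unfolding node using assms by (simp add: h_def)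
  qed
  moreover have "k < M" using assms(1) by (simp add: k_def)
  ultimately show ?thesis using that by blast
qed

lemma abs_diff_equi_nodes_le:
  assumes "continuous_on {-pi..pi} f" "M > 0" "2 * pi / real M \<le> d" "a + e \<le> M"
  shows "\<bar>f (equi_node M a) - f (equi_node M (a + e))\<bar> \<le> real e * modcont f d"
  using assms(4)
proof (induction e)
  case (Suc e)
  have "\<bar>f (equi_node M (a + e)) - f (equi_node M (a + Suc e))\<bar> \<le> modcont f d"
  proof (rule abs_diff_le_modcont[OF assms(1)])
    show "equi_node M (a + e) \<in> {-pi..pi}" "equi_node M (a + Suc e) \<in> {-pi..pi}"
      using Suc.prems assms(2) by (auto intro!: equi_node_mem simp del: atLeastAtMost_iff)
    have "equi_node M (a + Suc e) - equi_node M (a + e) = 2 * pi / real M"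
      using equi_node_diff[of M "a + Suc e" "a + e"] by simp
    moreover have "0 < 2 * pi / real M" using assms(2) by simp
    ultimately show "\<bar>equi_node M (a + e) - equi_node M (a + Suc e)\<bar> \<le> d"
      using assms(3) by (simp add: abs_if)
  qed
  then show ?case using Suc by (simp add: algebra_simps)
qed simp

text \<open>Going around the circle through \<open>t\<^sub>0\<close> and \<open>t\<^sub>M\<close>, where \<open>f\<close> agrees by periodicity, makes the
  estimate depend on the circular distance of the nodes.\<close>

lemma abs_diff_equi_nodes_le_circ_dist:
  assumes f: "continuous_on {-pi..pi} f" "f (-pi) = f pi"
    and M: "M > 0" and h_le_d: "2 * pi / real M \<le> d" and "a \<le> M" "b \<le> M"
  shows "\<bar>f (equi_node M a) - f (equi_node M b)\<bar>
           \<le> modcont f d / (2 * pi / real M) * circ_dist (equi_node M a) (equi_node M b)"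
proof -
  define W where "W = modcont f d"
  define h where "h = 2 * pi / real M"
  have h_pos: "h > 0" using M by (simp add: h_def)
  have ordered: "\<bar>f (equi_node M a) - f (equi_node M b)\<bar> \<le> W / h * circ_dist (equi_node M a) (equi_node M b)"
    if "a \<le> b" "b \<le> M" for a b
  proof -
    have direct: "\<bar>f (equi_node M a) - f (equi_node M b)\<bar> \<le> (real b - real a) * W"
      using abs_diff_equi_nodes_le[OF f(1) M h_le_d, of a "b - a"] that by (simp add: W_def of_nat_diff)
    have "\<bar>f (equi_node M 0) - f (equi_node M a)\<bar> \<le> real a * W"
      using abs_diff_equi_nodes_le[OF f(1) M h_le_d, of 0 a] that by (simp add: W_def)
    moreover have "\<bar>f (equi_node M b) - f (equi_node M M)\<bar> \<le> real (M - b) * W"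
      using abs_diff_equi_nodes_le[OF f(1) M h_le_d, of b "M - b"] that by (simp add: W_def)
    moreover have "f (equi_node M 0) = f (equi_node M M)" using f(2) M by (simp add: equi_node_def)
    ultimately have around: "\<bar>f (equi_node M a) - f (equi_node M b)\<bar> \<le> (real M - (real b - real a)) * W"
      using that by (simp add: algebra_simps of_nat_diff)
    have "0 \<le> (real b - real a) * h" using that h_pos by simp
    then have "\<bar>equi_node M a - equi_node M b\<bar> = (real b - real a) * h"
      using equi_node_diff[of M b a] unfolding h_def[symmetric] by linarith
    moreover have "2 * pi = real M * h" using M by (simp add: h_def)
    ultimately have "circ_dist (equi_node M a) (equi_node M b) = min ((real b - real a) * h) ((real M - (real b - real a)) * h)"
      unfolding circ_dist_def by (simp add: left_diff_distrib)
    then show ?thesis using direct around h_pos by (simp add: min_def mult.commute)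
  qed
  show ?thesis
    using ordered[of a b] ordered[of b a] assms(5,6)
    by (cases "a \<le> b") (auto simp: W_def h_def circ_dist_commute abs_minus_commute)
qed

lemma circ_dist_interpolation:
  assumes "M > 0" "j < M" "equi_node M k \<le> x" "x \<le> equi_node M (Suc k)"
  defines "\<mu> \<equiv> (equi_node M (Suc k) - x) / (2 * pi / real M)"
  shows "\<mu> * circ_dist (equi_node M k) (equi_node M j) + (1 - \<mu>) * circ_dist (equi_node M (Suc k)) (equi_node M j)
           \<le> circ_dist x (equi_node M j)"
proof -
  define h where "h = 2 * pi / real M"
  have h_pos: "h > 0" using assms(1) by (simp add: h_def)
  have next_node: "equi_node M (Suc k) = equi_node M k + h"
    unfolding equi_node_def h_def by (simp add: distrib_right add_divide_distrib)
  have x_eq: "x = \<mu> * equi_node M k + (1 - \<mu>) * equi_node M (Suc k)"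
    unfolding \<mu>_def h_def[symmetric] next_node using h_pos by (simp add: field_simps)
  have \<mu>: "0 \<le> \<mu>" "\<mu> \<le> 1"
    unfolding \<mu>_def h_def[symmetric] using assms(3,4) h_pos next_node by (auto simp: field_simps)
  define A where "A = \<bar>equi_node M k - equi_node M j\<bar>"
  define B where "B = \<bar>equi_node M (Suc k) - equi_node M j\<bar>"
  text \<open>\<open>t\<^sub>j\<close> is not strictly between the two bracketing nodes, so \<open>\<bar>x - t\<^sub>j\<bar>\<close> is affine in \<open>\<mu>\<close>.\<close>
  have abs_x: "\<bar>x - equi_node M j\<bar> = \<mu> * A + (1 - \<mu>) * B"
  proof (cases "j \<le> k")
    case True
    then have "equi_node M j \<le> equi_node M k" by (rule equi_node_mono)
    then show ?thesis using x_eq \<mu> next_node h_pos assms(3,4)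
      by (simp add: A_def B_def abs_of_nonneg algebra_simps)
  next
    case False
    then have "equi_node M (Suc k) \<le> equi_node M j" by (intro equi_node_mono) simp
    then show ?thesis using x_eq \<mu> next_node h_pos assms(3,4)
      by (simp add: A_def B_def abs_of_nonpos algebra_simps)
  qed
  have "\<mu> * min A (2 * pi - A) \<le> \<mu> * A" "\<mu> * min A (2 * pi - A) \<le> \<mu> * (2 * pi - A)"
    "(1 - \<mu>) * min B (2 * pi - B) \<le> (1 - \<mu>) * B" "(1 - \<mu>) * min B (2 * pi - B) \<le> (1 - \<mu>) * (2 * pi - B)"
    using \<mu> by (auto intro: mult_left_mono)
  then show ?thesis unfolding circ_dist_def abs_x A_def[symmetric] B_def[symmetric]
    by (simp add: algebra_simps)
qed

definition jackson_op :: "nat \<Rightarrow> (real \<Rightarrow> real) \<Rightarrow> real \<Rightarrow> real" where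
  "jackson_op m f x = (\<Sum>j<2*m+2. f (equi_node (2*m+2) j) * jackson_weight m j x)"

lemma trig_poly_jackson_op:
  assumes "2 * m \<le> n"
  shows "jackson_op m f \<in> trig_poly n"
proof -
  have "(\<lambda>x. \<Sum>j<2*m+2. (f (equi_node (2*m+2) j) / (real (2*m+2) * jackson_energy m))
                          * jackson_kernel m (x - equi_node (2*m+2) j)) \<in> trig_poly n"
    using assms by (intro trig_poly_sum trig_poly_cmult trig_poly_jackson_kernel) auto
  then show ?thesis unfolding jackson_op_def jackson_weight_def by (simp add: fun_eq_iff)
qed

lemma abs_diff_jackson_op_le:
  assumes "\<And>j. j < 2*m+2 \<Longrightarrow> \<bar>c - f (equi_node (2*m+2) j)\<bar> \<le> K * \<bar>sin ((x - equi_node (2*m+2) j) / 2)\<bar>"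
    and "0 \<le> K"
  shows "\<bar>c - jackson_op m f x\<bar> \<le> K / (real m + 1)"
proof -
  define M where "M = 2*m+2"
  have "c - jackson_op m f x = (\<Sum>j<M. jackson_weight m j x * (c - f (equi_node M j)))"
    using sum_jackson_weight[of m x]
    unfolding jackson_op_def M_def[symmetric]
    by (simp add: right_diff_distrib sum_subtractf sum_distrib_left[symmetric] mult.commute)
  then have "\<bar>c - jackson_op m f x\<bar> \<le> (\<Sum>j<M. jackson_weight m j x * \<bar>c - f (equi_node M j)\<bar>)"
    by (simp add: sum_abs[THEN order_trans] abs_mult jackson_weight_nonneg)
  also have "\<dots> \<le> (\<Sum>j<M. jackson_weight m j x * (K * \<bar>sin ((x - equi_node M j) / 2)\<bar>))"
    using assms(1) by (intro sum_mono mult_left_mono jackson_weight_nonneg) (simp add: M_def)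
  also have "\<dots> = K * (\<Sum>j<M. jackson_weight m j x * \<bar>sin ((x - equi_node M j) / 2)\<bar>)"
    by (simp add: sum_distrib_left algebra_simps)
  also have "\<dots> \<le> K * (1 / (real m + 1))"
    using jackson_weight_sin_moment[of m x] assms(2) unfolding M_def by (rule mult_left_mono)
  finally show ?thesis by simp
qed

text \<open>The reference value \<open>c\<close> is the linear interpolant of \<open>f\<close> at \<open>x\<close> between the two
  bracketing nodes.\<close>

lemma interpolant_near_nodes:
  assumes f: "continuous_on {-pi..pi} f" "f (-pi) = f pi"
    and M: "M > 0" and h_le_d: "2 * pi / real M \<le> d" and x: "x \<in> {-pi..pi}"
  obtains c where "\<bar>f x - c\<bar> \<le> modcont f d"
    and "\<And>j. j < M \<Longrightarrow> \<bar>c - f (equi_node M j)\<bar>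
            \<le> modcont f d / (2 * pi / real M) * (pi * \<bar>sin ((x - equi_node M j) / 2)\<bar>)"
proof -
  define W where "W = modcont f d"
  define h where "h = 2 * pi / real M"
  have h_pos: "h > 0" using M by (simp add: h_def)
  have W_nonneg: "W \<ge> 0" unfolding W_def using modcont_nonneg[OF f(1)] h_le_d h_pos h_def by simp
  obtain k where k: "k < M" "equi_node M k \<le> x" "x \<le> equi_node M (Suc k)"
    using equi_node_bracket[OF M x] .
  define \<mu> where "\<mu> = (equi_node M (Suc k) - x) / h"
  have next_node: "equi_node M (Suc k) = equi_node M k + h"
    unfolding equi_node_def h_def by (simp add: distrib_right add_divide_distrib)
  have \<mu>: "0 \<le> \<mu>" "\<mu> \<le> 1" unfolding \<mu>_def using k h_pos next_node by (auto simp: field_simps)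
  have nodes: "equi_node M k \<in> {-pi..pi}" "equi_node M (Suc k) \<in> {-pi..pi}"
    using k M by (auto intro!: equi_node_mem simp del: atLeastAtMost_iff)
  define c where "c = \<mu> * f (equi_node M k) + (1 - \<mu>) * f (equi_node M (Suc k))"
  have convex_bound: "\<bar>c - y\<bar> \<le> \<mu> * A + (1 - \<mu>) * B"
    if "\<bar>f (equi_node M k) - y\<bar> \<le> A" "\<bar>f (equi_node M (Suc k)) - y\<bar> \<le> B" for y A B
  proof -
    have "c - y = \<mu> * (f (equi_node M k) - y) + (1 - \<mu>) * (f (equi_node M (Suc k)) - y)"
      unfolding c_def by (simp add: algebra_simps)
    then have "\<bar>c - y\<bar> \<le> \<mu> * \<bar>f (equi_node M k) - y\<bar> + (1 - \<mu>) * \<bar>f (equi_node M (Suc k)) - y\<bar>"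
      using \<mu> by (simp add: abs_triangle_ineq[THEN order_trans] abs_mult)
    also have "\<dots> \<le> \<mu> * A + (1 - \<mu>) * B" using \<mu> that by (intro add_mono mult_left_mono) auto
    finally show ?thesis .
  qed
  show ?thesis
  proof
    have "\<bar>f (equi_node M k) - f x\<bar> \<le> W"
      unfolding W_def by (rule abs_diff_le_modcont[OF f(1) nodes(1) x]) (use k next_node h_le_d h_def in simp)
    moreover have "\<bar>f (equi_node M (Suc k)) - f x\<bar> \<le> W"
      unfolding W_def by (rule abs_diff_le_modcont[OF f(1) nodes(2) x]) (use k next_node h_le_d h_def in simp)
    ultimately have "\<bar>c - f x\<bar> \<le> \<mu> * W + (1 - \<mu>) * W" by (rule convex_bound)
    then show "\<bar>f x - c\<bar> \<le> modcont f d"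
      by (simp add: W_def abs_minus_commute algebra_simps)
  next
    fix j assume j: "j < M"
    have "\<bar>c - f (equi_node M j)\<bar>
        \<le> \<mu> * (W / h * circ_dist (equi_node M k) (equi_node M j))
          + (1 - \<mu>) * (W / h * circ_dist (equi_node M (Suc k)) (equi_node M j))"
      using k j unfolding W_def h_def
      by (intro convex_bound abs_diff_equi_nodes_le_circ_dist[OF f M h_le_d]) auto
    also have "\<dots> = W / h * (\<mu> * circ_dist (equi_node M k) (equi_node M j)
                              + (1 - \<mu>) * circ_dist (equi_node M (Suc k)) (equi_node M j))"
      by (simp only: distrib_left mult.left_commute)
    also have "\<dots> \<le> W / h * circ_dist x (equi_node M j)"
      using circ_dist_interpolation[OF M j k(2,3)] W_nonneg h_pos
      unfolding \<mu>_def h_def by (intro mult_left_mono) auto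
    also have "\<dots> \<le> W / h * (pi * \<bar>sin ((x - equi_node M j) / 2)\<bar>)"
      using circ_dist_le_pi_abs_sin[OF x equi_node_mem[OF M, of j]] j W_nonneg h_pos
      by (intro mult_left_mono) auto
    finally show "\<bar>c - f (equi_node M j)\<bar> \<le> modcont f d / (2 * pi / real M) * (pi * \<bar>sin ((x - equi_node M j) / 2)\<bar>)"
      unfolding W_def h_def .
  qed
qed

lemma abs_diff_jackson_op_le_modcont:
  assumes f: "continuous_on {-pi..pi} f" "f (-pi) = f pi"
    and h_le_d: "2 * pi / real (2*m+2) \<le> d" and x: "x \<in> {-pi..pi}"
  shows "\<bar>f x - jackson_op m f x\<bar> \<le> 2 * modcont f d"
proof -
  define W where "W = modcont f d"
  have "2 * pi / real (2*m+2) = pi / (real m + 1)" by (simp add: field_simps)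
  then have h: "W / (2 * pi / real (2*m+2)) * pi = W * (real m + 1)" by simp
  have "0 < 2 * pi / real (2*m+2)" by simp
  then have W_nonneg: "0 \<le> W" unfolding W_def using h_le_d by (intro modcont_nonneg[OF f(1)]) linarith
  obtain c where c: "\<bar>f x - c\<bar> \<le> W"
    and near: "\<And>j. j < 2*m+2 \<Longrightarrow> \<bar>c - f (equi_node (2*m+2) j)\<bar>
                 \<le> W * (real m + 1) * \<bar>sin ((x - equi_node (2*m+2) j) / 2)\<bar>"
    using interpolant_near_nodes[OF f _ h_le_d x] unfolding W_def[symmetric] h[symmetric]
    by (metis mult.assoc zero_less_Suc add_2_eq_Suc')
  have "\<bar>c - jackson_op m f x\<bar> \<le> W * (real m + 1) / (real m + 1)"
    using W_nonneg by (intro abs_diff_jackson_op_le near mult_nonneg_nonneg) simp_all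
  then show ?thesis using c unfolding W_def by simp
qed

lemma jackson_trig_approximation:
  assumes "continuous_on {-pi..pi} f" "f (-pi) = f pi" "n \<ge> 1"
  obtains p where "p \<in> trig_poly n" "\<And>x. x \<in> {-pi..pi} \<Longrightarrow> \<bar>f x - p x\<bar> \<le> 2 * modcont f (2 * pi * sqrt 3 / (real n + 2))"
proof
  define m where "m = n div 2"
  show "jackson_op m f \<in> trig_poly n" unfolding m_def by (rule trig_poly_jackson_op) simp
  have "3 / 2 \<le> sqrt 3" by (rule real_le_rsqrt) (simp add: power2_eq_square)
  moreover have "n \<le> 2 * m + 1" unfolding m_def by linarith
  then have "real n \<le> 2 * real m + 1" by simp
  then have "real n + 2 \<le> 3 / 2 * (2 * real m + 2)" using assms(3) by simp
  ultimately have "real n + 2 \<le> sqrt 3 * (2 * real m + 2)"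
    by (smt (verit) mult_right_mono of_nat_0_le_iff)
  then have "2 * pi * (real n + 2) \<le> 2 * pi * (sqrt 3 * (2 * real m + 2))"
    by (intro mult_left_mono) simp_all
  then have "2 * pi / real (2*m+2) \<le> 2 * pi * sqrt 3 / (real n + 2)"
    by (simp add: field_simps)
  then show "\<bar>f x - jackson_op m f x\<bar> \<le> 2 * modcont f (2 * pi * sqrt 3 / (real n + 2))"
    if "x \<in> {-pi..pi}" for x
    using abs_diff_jackson_op_le_modcont[OF assms(1,2) _ that] by blast
qed

section \<open>Fractal functions\<close>

lemma partition_pi_strict_mono:
  assumes "partition_pi N xs" "i < j" "j \<le> N"
  shows "xs i < xs j"
  using assms(2,3)
proof (induction j)
  case (Suc j)
  then have "xs j < xs (Suc j)" using assms(1) unfolding partition_pi_def by simp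
  with Suc show ?case by (cases "i = j") auto
qed simp

lemma partition_pi_mono:
  assumes "partition_pi N xs" "i \<le> j" "j \<le> N"
  shows "xs i \<le> xs j"
  using partition_pi_strict_mono[OF assms(1), of i j] assms(2,3) by (cases "i = j") auto

lemma partition_pi_pos: "partition_pi N xs \<Longrightarrow> 0 < N"
  unfolding partition_pi_def by (cases N) auto

lemma partition_pi_piece_subset:
  assumes "partition_pi N xs" "i \<in> {1..N}"
  shows "{xs (i - 1)..xs i} \<subseteq> {-pi..pi}"
  using partition_pi_mono[OF assms(1), of 0 "i - 1"] partition_pi_mono[OF assms(1), of i N] assms
  unfolding partition_pi_def by auto

lemma partition_pi_cover:
  assumes "partition_pi N xs" "x \<in> {-pi..pi}"
  obtains i where "i \<in> {1..N}" "x \<in> {xs (i - 1)..xs i}"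
proof -
  define i where "i = (LEAST i. x \<le> xs i)"
  have "x \<le> xs N" using assms unfolding partition_pi_def by simp
  then have "x \<le> xs i" "i \<le> N" unfolding i_def by (auto intro: LeastI Least_le)
  show ?thesis
  proof (cases "i = 0")
    case True
    then have "x = xs 0" using \<open>x \<le> xs i\<close> assms unfolding partition_pi_def by simp
    then show ?thesis
      using that[of 1] partition_pi_pos[OF assms(1)] partition_pi_mono[OF assms(1), of 0 1] by simp
  next
    case False
    then have "\<not> x \<le> xs (i - 1)" unfolding i_def by (intro not_less_Least) (simp add: i_def[symmetric])
    then show ?thesis using that[of i] False \<open>x \<le> xs i\<close> \<open>i \<le> N\<close> by simp
  qed
qed

lemma partition_pi_pieces_meet_at_ends:
  assumes "partition_pi N xs" "i \<in> {1..N}" "j \<in> {1..N}" "i \<noteq> j"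
    and "y \<in> {xs (i - 1)..xs i}" "y \<in> {xs (j - 1)..xs j}"
  shows "y = xs (i - 1) \<or> y = xs i"
proof (cases "i < j")
  case True
  then have "xs i \<le> xs (j - 1)" using assms by (intro partition_pi_mono) auto
  then show ?thesis using assms by auto
next
  case False
  then have "xs j \<le> xs (i - 1)" using assms by (intro partition_pi_mono) auto
  then show ?thesis using assms by auto
qed

lemma Linv_left: "Linv xs i (xs (i - 1)) = -pi"
  unfolding Linv_def by simp

lemma Linv_right: "xs (i - 1) < xs i \<Longrightarrow> Linv xs i (xs i) = pi"
  unfolding Linv_def by simp

lemma Linv_mem:
  assumes "xs (i - 1) < xs i" "y \<in> {xs (i - 1)..xs i}"
  shows "Linv xs i y \<in> {-pi..pi}"
proof -
  define t where "t = (y - xs (i - 1)) / (xs i - xs (i - 1))"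
  have "0 \<le> t" "t \<le> 1" using assms by (auto simp: t_def field_simps)
  moreover have "Linv xs i y = -pi + 2 * pi * t" unfolding Linv_def t_def by simp
  ultimately show ?thesis by (auto intro: mult_left_le)
qed

lemma continuous_on_Linv: "continuous_on S (Linv xs i)"
proof -
  have affine: "Linv xs i = (\<lambda>y. -pi + (y - xs (i - 1)) * (2 * pi / (xs i - xs (i - 1))))"
    unfolding Linv_def by (simp add: fun_eq_iff)
  show ?thesis unfolding affine by (intro continuous_intros)
qed

lemma abs_le_alpha_norm: "i \<in> {1..N} \<Longrightarrow> \<bar>\<alpha> i\<bar> \<le> alpha_norm N \<alpha>"
  unfolding alpha_norm_def by (intro Max_ge) auto

lemma alpha_norm_nonneg: "0 < N \<Longrightarrow> 0 \<le> alpha_norm N \<alpha>"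
  using abs_le_alpha_norm[of 1 N \<alpha>] by auto

lemma alpha_norm_less_1:
  assumes "0 < N" "\<forall>i\<in>{1..N}. \<bar>\<alpha> i\<bar> < 1"
  shows "alpha_norm N \<alpha> < 1"
  unfolding alpha_norm_def using assms by (subst Max_less_iff) auto

lemma supn_le_of_self_bound:
  assumes "continuous_on {-pi..pi} h" "0 \<le> a" "a < 1"
    and "\<And>x. x \<in> {-pi..pi} \<Longrightarrow> \<bar>h x\<bar> \<le> a * (supn h + c)"
  shows "supn h \<le> a / (1 - a) * c"
proof -
  have "supn h \<le> a * (supn h + c)" using assms(4) by (rule supn_leI)
  then have "(1 - a) * supn h \<le> a * c" by (simp add: algebra_simps)
  then show ?thesis using assms(3) by (simp add: field_simps)
qed

locale fractal_data =
  fixes N :: nat and xs :: "nat \<Rightarrow> real" and \<alpha> :: "nat \<Rightarrow> real" and b r :: "real \<Rightarrow> real"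
  assumes partition: "partition_pi N xs"
    and alpha_bound: "\<forall>i\<in>{1..N}. \<bar>\<alpha> i\<bar> < 1"
    and continuous_r: "continuous_on {-pi..pi} r"
    and continuous_b: "continuous_on {-pi..pi} b"
    and b_left: "b (-pi) = r (-pi)" and b_right: "b pi = r pi"
begin

lemma N_pos: "0 < N"
  using partition by (rule partition_pi_pos)

lemma piece_nonempty: "i \<in> {1..N} \<Longrightarrow> xs (i - 1) < xs i"
  using partition_pi_strict_mono[OF partition, of "i - 1" i] by auto

lemma alpha_norm_bounds: "0 \<le> alpha_norm N \<alpha>" "alpha_norm N \<alpha> < 1"
  using alpha_norm_nonneg[OF N_pos] alpha_norm_less_1[OF N_pos alpha_bound] by auto

definition fractal_eqn :: "(real \<Rightarrow> real) \<Rightarrow> bool" where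
  "fractal_eqn g \<longleftrightarrow> continuous_on {-pi..pi} g
      \<and> (\<forall>x. x \<notin> {-pi..pi} \<longrightarrow> g x = 0)
      \<and> (\<forall>i\<in>{1..N}. \<forall>x\<in>{xs (i - 1)..xs i}. g x = r x + \<alpha> i * (g (Linv xs i x) - b (Linv xs i x)))"

lemma fractal_eqn_bound:
  assumes "fractal_eqn g" "x \<in> {-pi..pi}"
  shows "\<bar>g x - r x\<bar> \<le> alpha_norm N \<alpha> / (1 - alpha_norm N \<alpha>) * supn (\<lambda>x. r x - b x)"
proof -
  define h where "h x = g x - r x" for x
  define e where "e x = r x - b x" for x
  have h_cont: "continuous_on {-pi..pi} h" using assms(1) continuous_r
    unfolding fractal_eqn_def h_def by (auto intro: continuous_intros)
  have e_cont: "continuous_on {-pi..pi} e" using continuous_b continuous_r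
    unfolding e_def by (auto intro: continuous_intros)
  have "supn h \<le> alpha_norm N \<alpha> / (1 - alpha_norm N \<alpha>) * supn e"
  proof (rule supn_le_of_self_bound[OF h_cont alpha_norm_bounds])
    fix y assume "y \<in> {-pi..pi}"
    then obtain i where i: "i \<in> {1..N}" "y \<in> {xs (i - 1)..xs i}" by (rule partition_pi_cover[OF partition])
    have z: "Linv xs i y \<in> {-pi..pi}" by (rule Linv_mem[OF piece_nonempty[OF i(1)] i(2)])
    have "h y = \<alpha> i * (h (Linv xs i y) + e (Linv xs i y))"
      using assms(1) i unfolding fractal_eqn_def h_def e_def by (simp add: algebra_simps)
    then have "\<bar>h y\<bar> = \<bar>\<alpha> i\<bar> * \<bar>h (Linv xs i y) + e (Linv xs i y)\<bar>" by (simp add: abs_mult)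
    also have "\<dots> \<le> alpha_norm N \<alpha> * (supn h + supn e)"
      using abs_le_alpha_norm[OF i(1)] abs_le_supn[OF h_cont z] abs_le_supn[OF e_cont z]
        alpha_norm_bounds(1)
      by (intro mult_mono) auto
    finally show "\<bar>h y\<bar> \<le> alpha_norm N \<alpha> * (supn h + supn e)" .
  qed
  with abs_le_supn[OF h_cont assms(2)] show ?thesis unfolding h_def e_def by simp
qed

lemma fractal_eqn_unique:
  assumes "fractal_eqn g1" "fractal_eqn g2"
  shows "g1 = g2"
proof
  fix x
  define h where "h x = g1 x - g2 x" for x
  have h_cont: "continuous_on {-pi..pi} h" using assms
    unfolding fractal_eqn_def h_def by (auto intro: continuous_intros)
  have "supn h \<le> alpha_norm N \<alpha> / (1 - alpha_norm N \<alpha>) * 0"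
  proof (rule supn_le_of_self_bound[OF h_cont alpha_norm_bounds])
    fix y assume "y \<in> {-pi..pi}"
    then obtain i where i: "i \<in> {1..N}" "y \<in> {xs (i - 1)..xs i}" by (rule partition_pi_cover[OF partition])
    have z: "Linv xs i y \<in> {-pi..pi}" by (rule Linv_mem[OF piece_nonempty[OF i(1)] i(2)])
    have "g1 y = r y + \<alpha> i * (g1 (Linv xs i y) - b (Linv xs i y))"
      "g2 y = r y + \<alpha> i * (g2 (Linv xs i y) - b (Linv xs i y))"
      using assms i unfolding fractal_eqn_def by blast+
    then have "h y = \<alpha> i * h (Linv xs i y)" unfolding h_def by (simp add: algebra_simps)
    then show "\<bar>h y\<bar> \<le> alpha_norm N \<alpha> * (supn h + 0)"
      using abs_le_alpha_norm[OF i(1)] abs_le_supn[OF h_cont z] alpha_norm_bounds(1)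
      by (simp add: abs_mult mult_mono)
  qed
  then show "g1 x = g2 x"
    using abs_le_supn[OF h_cont, of x] assms unfolding fractal_eqn_def h_def
    by (cases "x \<in> {-pi..pi}") auto
qed

definition piece_index :: "real \<Rightarrow> nat" where
  "piece_index y = (SOME i. i \<in> {1..N} \<and> y \<in> {xs (i - 1)..xs i})"

definition fractal_step :: "(real \<Rightarrow> real) \<Rightarrow> real \<Rightarrow> real" where
  "fractal_step \<phi> y = r y + \<alpha> (piece_index y) *
      (\<phi> (Linv xs (piece_index y) y) - b (Linv xs (piece_index y) y))"

text \<open>At a common endpoint of two pieces both branches of the equation give \<open>r y\<close>, because
  \<open>\<phi>\<close> agrees with \<open>b\<close> at \<open>\<plusminus>pi\<close>; hence the choice of the piece is irrelevant.\<close>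

lemma fractal_step_eq:
  assumes "\<phi> (-pi) = b (-pi)" "\<phi> pi = b pi" "i \<in> {1..N}" "y \<in> {xs (i - 1)..xs i}"
  shows "fractal_step \<phi> y = r y + \<alpha> i * (\<phi> (Linv xs i y) - b (Linv xs i y))"
proof -
  have at_ends: "r y + \<alpha> j * (\<phi> (Linv xs j y) - b (Linv xs j y)) = r y"
    if "j \<in> {1..N}" "y = xs (j - 1) \<or> y = xs j" for j
    using that assms(1,2) Linv_left[of xs j] Linv_right[OF piece_nonempty[OF that(1)]] by auto
  define j where "j = piece_index y"
  have "j \<in> {1..N} \<and> y \<in> {xs (j - 1)..xs j}"
    unfolding j_def piece_index_def by (rule someI[of _ i]) (use assms(3,4) in simp)
  then have j: "j \<in> {1..N}" "y \<in> {xs (j - 1)..xs j}" by auto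
  show ?thesis
  proof (cases "j = i")
    case False
    then show ?thesis
      using at_ends[OF j(1)] at_ends[OF assms(3)]
        partition_pi_pieces_meet_at_ends[OF partition assms(3) j(1) _ assms(4) j(2)]
        partition_pi_pieces_meet_at_ends[OF partition j(1) assms(3) _ j(2) assms(4)]
      unfolding fractal_step_def j_def[symmetric] by auto
  qed (simp add: fractal_step_def j_def)
qed

lemma continuous_on_fractal_step:
  assumes "continuous_on {-pi..pi} \<phi>" "\<phi> (-pi) = b (-pi)" "\<phi> pi = b pi"
  shows "continuous_on {-pi..pi} (fractal_step \<phi>)"
proof -
  have "continuous_on (\<Union>i\<in>{1..N}. {xs (i - 1)..xs i}) (fractal_step \<phi>)"
  proof (rule continuous_on_closed_Union)
    fix i assume i: "i \<in> {1..N}"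
    have "Linv xs i ` {xs (i - 1)..xs i} \<subseteq> {-pi..pi}" using Linv_mem[OF piece_nonempty[OF i]] by auto
    then have "continuous_on {xs (i - 1)..xs i} (\<lambda>y. r y + \<alpha> i * (\<phi> (Linv xs i y) - b (Linv xs i y)))"
      using continuous_on_subset[OF continuous_r partition_pi_piece_subset[OF partition i]]
      by (intro continuous_intros continuous_on_compose2[OF assms(1) continuous_on_Linv]
            continuous_on_compose2[OF continuous_b continuous_on_Linv]) auto
    then show "continuous_on {xs (i - 1)..xs i} (fractal_step \<phi>)"
      by (rule continuous_on_eq) (simp add: fractal_step_eq[OF assms(2,3) i])
  qed auto
  moreover have "(\<Union>i\<in>{1..N}. {xs (i - 1)..xs i}) = {-pi..pi}"
    using partition_pi_cover[OF partition] partition_pi_piece_subset[OF partition] by blast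
  ultimately show ?thesis by simp
qed

lemma fractal_step_endpoints:
  assumes "\<phi> (-pi) = b (-pi)" "\<phi> pi = b pi"
  shows "fractal_step \<phi> (-pi) = r (-pi)" "fractal_step \<phi> pi = r pi"
proof -
  have "1 \<in> {1..N}" "N \<in> {1..N}" using N_pos by auto
  moreover have "xs 0 = -pi" "xs N = pi" using partition unfolding partition_pi_def by auto
  ultimately show "fractal_step \<phi> (-pi) = r (-pi)" "fractal_step \<phi> pi = r pi"
    using fractal_step_eq[OF assms, of 1 "-pi"] fractal_step_eq[OF assms, of N pi]
      piece_nonempty[of 1] piece_nonempty[of N] Linv_left[of xs 1] Linv_right[of xs N] assms
    by auto
qed

lemma fractal_step_contraction:
  assumes "\<phi> (-pi) = b (-pi)" "\<phi> pi = b pi" "\<psi> (-pi) = b (-pi)" "\<psi> pi = b pi"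
    and "y \<in> {-pi..pi}"
  obtains z where "z \<in> {-pi..pi}"
    "\<bar>fractal_step \<phi> y - fractal_step \<psi> y\<bar> \<le> alpha_norm N \<alpha> * \<bar>\<phi> z - \<psi> z\<bar>"
proof -
  obtain i where i: "i \<in> {1..N}" "y \<in> {xs (i - 1)..xs i}"
    using partition_pi_cover[OF partition assms(5)] .
  have "fractal_step \<phi> y - fractal_step \<psi> y = \<alpha> i * (\<phi> (Linv xs i y) - \<psi> (Linv xs i y))"
    unfolding fractal_step_eq[OF assms(1,2) i] fractal_step_eq[OF assms(3,4) i] by (simp add: algebra_simps)
  then have "\<bar>fractal_step \<phi> y - fractal_step \<psi> y\<bar> \<le> alpha_norm N \<alpha> * \<bar>\<phi> (Linv xs i y) - \<psi> (Linv xs i y)\<bar>"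
    using abs_le_alpha_norm[OF i(1)] by (simp add: abs_mult mult_right_mono)
  then show ?thesis using that Linv_mem[OF piece_nonempty[OF i(1)] i(2)] by blast
qed

text \<open>The solution is the fixed point of \<open>fractal_step\<close>, a contraction with constant
  \<open>alpha_norm N \<alpha>\<close> on the bounded continuous functions with the values of \<open>r\<close> at \<open>\<plusminus>pi\<close>;
  functions on \<open>[-pi, pi]\<close> are extended to \<open>\<real>\<close> by \<open>ext_cont\<close>.\<close>

lemma fractal_eqn_exists: "\<exists>g. fractal_eqn g"
proof -
  define S :: "(real \<Rightarrow>\<^sub>C real) set" where "S = PiC {-pi, pi} (\<lambda>t. {r t})"
  have mem_S: "\<phi> \<in> S \<longleftrightarrow> \<phi> (-pi) = b (-pi) \<and> \<phi> pi = b pi" for \<phi>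
    unfolding S_def mem_PiC_iff Pi_def using b_left b_right by auto
  have ext_bcontfun: "ext_cont g (-pi) pi \<in> bcontfun" if "continuous_on {-pi..pi} g" for g
  proof -
    have "bounded (g ` cbox (-pi) pi)"
      using that by (intro compact_imp_bounded compact_continuous_image) auto
    with that show ?thesis unfolding bcontfun_def
      using continuous_on_ext_cont[of "-pi" pi g UNIV] clamp_bounded[of g "-pi" pi]
      by (simp add: ext_cont_def)
  qed
  have ext_eq: "ext_cont g (-pi) pi x = g x" if "x \<in> {-pi..pi}" for g x
    using that by (intro ext_cont_cancel_cbox) simp
  define T where "T \<phi> = Bcontfun (ext_cont (fractal_step \<phi>) (-pi) pi)" for \<phi> :: "real \<Rightarrow>\<^sub>C real"
  have T_ext: "T \<phi> x = fractal_step \<phi> (clamp (-pi) pi x)" if "\<phi> \<in> S" for \<phi> x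
  proof -
    have "ext_cont (fractal_step \<phi>) (-pi) pi \<in> bcontfun"
      using that mem_S by (intro ext_bcontfun continuous_on_fractal_step) auto
    from Bcontfun_inverse[OF this] show ?thesis unfolding T_def ext_cont_def by simp
  qed
  have T_apply: "T \<phi> x = fractal_step \<phi> x" if "\<phi> \<in> S" "x \<in> {-pi..pi}" for \<phi> x
    using T_ext[OF that(1)] that(2) by simp
  have T_maps: "T ` S \<subseteq> S"
    using T_apply mem_S fractal_step_endpoints b_left b_right pi_gt_zero
    by (auto simp: less_imp_le)
  have T_contraction: "dist (T \<phi>) (T \<psi>) \<le> alpha_norm N \<alpha> * dist \<phi> \<psi>"
    if in_S: "\<phi> \<in> S" "\<psi> \<in> S" for \<phi> \<psi>
  proof (rule dist_bound)
    fix x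
    have "clamp (-pi) pi x \<in> {-pi..pi}" using clamp_in_interval[of "-pi" pi x] by simp
    then obtain z where "\<bar>T \<phi> x - T \<psi> x\<bar> \<le> alpha_norm N \<alpha> * \<bar>\<phi> z - \<psi> z\<bar>"
      using fractal_step_contraction in_S mem_S unfolding T_ext[OF in_S(1)] T_ext[OF in_S(2)] by metis
    also have "\<dots> \<le> alpha_norm N \<alpha> * dist \<phi> \<psi>"
      using dist_bounded[of \<phi> z \<psi>] alpha_norm_bounds(1) by (simp add: dist_real_def mult_left_mono)
    finally show "dist (T \<phi> x) (T \<psi> x) \<le> alpha_norm N \<alpha> * dist \<phi> \<psi>" by (simp add: dist_real_def)
  qed
  have "complete S" unfolding complete_eq_closed S_def by (intro closed_PiC) auto
  moreover have "Bcontfun (ext_cont r (-pi) pi) \<in> S"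
    using mem_S ext_bcontfun[OF continuous_r] b_left b_right pi_gt_zero
    by (simp add: Bcontfun_inverse ext_eq less_imp_le)
  ultimately obtain \<phi> where \<phi>: "\<phi> \<in> S" "T \<phi> = \<phi>"
    using Banach_fix[OF _ _ alpha_norm_bounds T_maps T_contraction] by blast
  define g where "g x = (if x \<in> {-pi..pi} then \<phi> x else 0)" for x
  have "fractal_eqn g" unfolding fractal_eqn_def
  proof (intro conjI allI impI ballI)
    show "continuous_on {-pi..pi} g"
      by (rule continuous_on_eq[of _ "apply_bcontfun \<phi>"]) (auto simp: g_def)
  next
    fix i x assume i: "i \<in> {1..N}" and x: "x \<in> {xs (i - 1)..xs i}"
    have "x \<in> {-pi..pi}" using partition_pi_piece_subset[OF partition i] x by auto
    moreover have "Linv xs i x \<in> {-pi..pi}" using Linv_mem[OF piece_nonempty[OF i] x] .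
    ultimately show "g x = r x + \<alpha> i * (g (Linv xs i x) - b (Linv xs i x))"
      using T_apply[OF \<phi>(1), of x] fractal_step_eq[of \<phi> i x] \<phi> mem_S i x by (simp add: g_def)
  qed (auto simp: g_def)
  then show ?thesis by blast
qed

lemma fractal_eqn_fractal_fun: "fractal_eqn (fractal_fun N xs \<alpha> b r)"
proof -
  obtain g where "fractal_eqn g" using fractal_eqn_exists by blast
  moreover have "fractal_fun N xs \<alpha> b r = g"
    unfolding fractal_fun_def fractal_eqn_def[symmetric]
    using calculation fractal_eqn_unique by blast
  ultimately show ?thesis by simp
qed

lemma continuous_on_fractal_fun: "continuous_on {-pi..pi} (fractal_fun N xs \<alpha> b r)"
  using fractal_eqn_fractal_fun unfolding fractal_eqn_def by simp

lemma abs_fractal_fun_diff_le: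
  "x \<in> {-pi..pi} \<Longrightarrow> \<bar>fractal_fun N xs \<alpha> b r x - r x\<bar>
      \<le> alpha_norm N \<alpha> / (1 - alpha_norm N \<alpha>) * supn (\<lambda>x. r x - b x)"
  using fractal_eqn_bound[OF fractal_eqn_fractal_fun] .

end

section \<open>Approximation by fractal trigonometric rational functions\<close>

lemma IdL_norm_set_bdd_above:
  assumes "admissible_L L"
  shows "bdd_above {supn (\<lambda>x. f x - L f x) | f. f \<in> C2pi \<and> supn f \<le> 1}"
proof -
  obtain B where B: "\<And>f. f \<in> C2pi \<Longrightarrow> supn (L f) \<le> B * supn f"
    using assms unfolding admissible_L_def by blast
  have "supn (\<lambda>x. f x - L f x) \<le> 1 + \<bar>B\<bar>" if f: "f \<in> C2pi" "supn f \<le> 1" for f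
  proof -
    have cont: "continuous_on {-pi..pi} f" "continuous_on {-pi..pi} (L f)"
      using f(1) assms unfolding admissible_L_def C2pi_def by auto
    have "supn (\<lambda>x. f x - L f x) \<le> supn f + supn (L f)"
    proof (rule supn_leI)
      fix x assume "x \<in> {-pi..pi}"
      then have "\<bar>f x\<bar> \<le> supn f" "\<bar>L f x\<bar> \<le> supn (L f)"
        using abs_le_supn[OF cont(1)] abs_le_supn[OF cont(2)] by auto
      then show "\<bar>f x - L f x\<bar> \<le> supn f + supn (L f)" by linarith
    qed
    also have "\<dots> \<le> supn f + \<bar>B\<bar> * supn f"
      using B[OF f(1)] mult_right_mono[OF abs_ge_self[of B] supn_nonneg[OF cont(1)]] by linarith
    also have "\<dots> \<le> 1 + \<bar>B\<bar>"
      using f(2) mult_left_mono[OF f(2), of "\<bar>B\<bar>"] by simp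
    finally show ?thesis .
  qed
  then show ?thesis unfolding bdd_above_def by blast
qed

lemma IdL_norm_nonneg:
  assumes "admissible_L L"
  shows "0 \<le> IdL_norm L"
proof -
  have zero: "(\<lambda>x. 0) \<in> C2pi" "supn (\<lambda>x. 0) \<le> 1" unfolding C2pi_def by (auto intro: supn_leI)
  then have in_set: "supn (\<lambda>x. 0 - L (\<lambda>x. 0) x) \<in> {supn (\<lambda>x. f x - L f x) | f. f \<in> C2pi \<and> supn f \<le> 1}"
    by (intro CollectI exI[of _ "\<lambda>x::real. 0::real"]) simp
  have "continuous_on {-pi..pi} (L (\<lambda>x. 0))"
    using assms zero(1) unfolding admissible_L_def C2pi_def by blast
  then have "0 \<le> supn (\<lambda>x. 0 - L (\<lambda>x. 0) x)" by (intro supn_nonneg continuous_intros)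
  also have "\<dots> \<le> IdL_norm L"
    unfolding IdL_norm_def by (intro cSup_upper in_set IdL_norm_set_bdd_above[OF assms])
  finally show ?thesis .
qed

lemma supn_diff_L_le:
  assumes adm: "admissible_L L" and r: "r \<in> C2pi"
  shows "supn (\<lambda>x. r x - L r x) \<le> IdL_norm L * supn r"
proof -
  have cont: "\<And>f. f \<in> C2pi \<Longrightarrow> continuous_on {-pi..pi} f" "\<And>f. f \<in> C2pi \<Longrightarrow> continuous_on {-pi..pi} (L f)"
    using adm unfolding admissible_L_def C2pi_def by auto
  define s where "s = supn r"
  show ?thesis
  proof (cases "s = 0")
    case True
    obtain B where "supn (L r) \<le> B * supn r" using adm r unfolding admissible_L_def by blast
    then show ?thesis
      using True abs_le_supn[OF cont(1)[OF r]] abs_le_supn[OF cont(2)[OF r]]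
      unfolding s_def by (intro supn_leI) fastforce
  next
    case False
    then have s_pos: "s > 0" using supn_nonneg[OF cont(1)[OF r]] unfolding s_def by simp
    text \<open>Linearity of \<open>L\<close> is only available for combinations of two functions.\<close>
    define r' where "r' t = (1 / s) * r t + 0 * r t" for t
    have "continuous_on {-pi..pi} r'" unfolding r'_def using cont(1)[OF r] by (intro continuous_intros)
    then have r': "r' \<in> C2pi" using r unfolding C2pi_def r'_def by simp
    have "supn r' \<le> 1"
      using abs_le_supn[OF cont(1)[OF r]] s_pos unfolding s_def[symmetric]
      by (intro supn_leI) (simp add: r'_def abs_mult field_simps)
    then have r'_le: "supn (\<lambda>x. r' x - L r' x) \<le> IdL_norm L"
      unfolding IdL_norm_def using r' by (intro cSup_upper IdL_norm_set_bdd_above[OF adm]) blast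
    show ?thesis
    proof (rule supn_leI)
      fix x assume x: "x \<in> {-pi..pi}"
      have "L r' x = (1 / s) * L r x + 0 * L r x"
        using adm r x unfolding admissible_L_def r'_def by blast
      then have "\<bar>r x - L r x\<bar> = s * \<bar>r' x - L r' x\<bar>"
        using s_pos by (simp add: r'_def abs_mult field_simps flip: abs_of_pos)
      also have "\<dots> \<le> s * IdL_norm L"
        using abs_le_supn[OF continuous_on_diff[OF cont(1,2)[OF r']] x] r'_le s_pos by simp
      finally show "\<bar>r x - L r x\<bar> \<le> IdL_norm L * supn r" by (simp add: s_def mult.commute)
    qed
  qed
qed

lemma fractal_data_fractal_op:
  assumes "partition_pi N xs" "\<forall>i\<in>{1..N}. \<bar>\<alpha> i\<bar> < 1" "admissible_L L" "p \<in> C2pi"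
  shows "fractal_data N xs \<alpha> (L p) p"
  using assms unfolding fractal_data_def admissible_L_def C2pi_def by auto

lemma abs_fractal_op_diff_le:
  assumes "partition_pi N xs" "\<forall>i\<in>{1..N}. \<bar>\<alpha> i\<bar> < 1" "admissible_L L" "p \<in> C2pi"
    and "x \<in> {-pi..pi}"
  shows "\<bar>fractal_op N xs \<alpha> L p x - p x\<bar>
           \<le> alpha_norm N \<alpha> / (1 - alpha_norm N \<alpha>) * (IdL_norm L * supn p)"
proof -
  interpret fractal_data N xs \<alpha> "L p" p by (rule fractal_data_fractal_op[OF assms(1-4)])
  have "0 \<le> alpha_norm N \<alpha> / (1 - alpha_norm N \<alpha>)" using alpha_norm_bounds by simp
  then have "alpha_norm N \<alpha> / (1 - alpha_norm N \<alpha>) * supn (\<lambda>x. p x - L p x)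
      \<le> alpha_norm N \<alpha> / (1 - alpha_norm N \<alpha>) * (IdL_norm L * supn p)"
    by (rule mult_left_mono[OF supn_diff_L_le[OF assms(3,4)]])
  then show ?thesis
    using abs_fractal_fun_diff_le[OF assms(5)] unfolding fractal_op_def by linarith
qed

lemma E_alpha_le_supn:
  assumes "partition_pi N xs" "\<forall>i\<in>{1..N}. \<bar>\<alpha> i\<bar> < 1" "admissible_L L"
    and "continuous_on {-pi..pi} f" "r \<in> trig_rat m n"
  shows "E_alpha N xs \<alpha> L m n f \<le> supn (\<lambda>x. f x - fractal_op N xs \<alpha> L r x)"
  unfolding E_alpha_def
proof (rule cInf_lower)
  show "supn (\<lambda>x. f x - fractal_op N xs \<alpha> L r x) \<in>
          {supn (\<lambda>x. f x - r\<alpha> x) | r\<alpha>. r\<alpha> \<in> fractal_op N xs \<alpha> L ` trig_rat m n}"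
    using assms(5) by blast
  have "0 \<le> supn (\<lambda>x. f x - fractal_op N xs \<alpha> L q x)" if "q \<in> trig_rat m n" for q
  proof -
    interpret fractal_data N xs \<alpha> "L q" q
      by (rule fractal_data_fractal_op[OF assms(1-3) trig_rat_in_C2pi[OF that]])
    show ?thesis
      using continuous_on_fractal_fun assms(4) unfolding fractal_op_def
      by (intro supn_nonneg continuous_intros)
  qed
  then show "bdd_below {supn (\<lambda>x. f x - r\<alpha> x) | r\<alpha>. r\<alpha> \<in> fractal_op N xs \<alpha> L ` trig_rat m n}"
    unfolding bdd_below_def by blast
qed

lemma supn_diff_fractal_op_le:
  assumes "partition_pi N xs" "\<forall>i\<in>{1..N}. \<bar>\<alpha> i\<bar> < 1" "admissible_L L" "p \<in> C2pi"
    and "continuous_on {-pi..pi} f" "\<And>x. x \<in> {-pi..pi} \<Longrightarrow> \<bar>f x - p x\<bar> \<le> \<epsilon>"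
  shows "supn (\<lambda>x. f x - fractal_op N xs \<alpha> L p x)
           \<le> \<epsilon> + alpha_norm N \<alpha> / (1 - alpha_norm N \<alpha>) * (IdL_norm L * (supn f + \<epsilon>))"
proof -
  define A where "A = alpha_norm N \<alpha> / (1 - alpha_norm N \<alpha>)"
  have "supn p \<le> supn f + \<epsilon>"
  proof (rule supn_leI)
    fix x assume "x \<in> {-pi..pi}"
    with abs_le_supn[OF assms(5)] assms(6) have "\<bar>f x\<bar> \<le> supn f" "\<bar>f x - p x\<bar> \<le> \<epsilon>" by auto
    then show "\<bar>p x\<bar> \<le> supn f + \<epsilon>" by linarith
  qed
  then have "IdL_norm L * supn p \<le> IdL_norm L * (supn f + \<epsilon>)"
    using IdL_norm_nonneg[OF assms(3)] by (rule mult_left_mono)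
  moreover have "0 \<le> A"
    using fractal_data.alpha_norm_bounds[OF fractal_data_fractal_op[OF assms(1-4)]] by (simp add: A_def)
  ultimately have "A * (IdL_norm L * supn p) \<le> A * (IdL_norm L * (supn f + \<epsilon>))"
    by (rule mult_left_mono)
  show ?thesis unfolding A_def[symmetric]
  proof (rule supn_leI)
    fix x assume x: "x \<in> {-pi..pi}"
    show "\<bar>f x - fractal_op N xs \<alpha> L p x\<bar> \<le> \<epsilon> + A * (IdL_norm L * (supn f + \<epsilon>))"
      using assms(6)[OF x] abs_fractal_op_diff_le[OF assms(1-4) x]
        \<open>A * (IdL_norm L * supn p) \<le> _\<close> unfolding A_def by linarith
  qed
qed

theorem mainTheorem7:
  fixes N :: nat and xs :: "nat \<Rightarrow> real" and \<alpha> :: "nat \<Rightarrow> real"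
    and L :: "(real \<Rightarrow> real) \<Rightarrow> (real \<Rightarrow> real)" and f :: "real \<Rightarrow> real" and n :: nat
  assumes "N \<ge> 2"
    and "partition_pi N xs"
    and "\<forall>i\<in>{1..N}. \<bar>\<alpha> i\<bar> < 1"
    and "admissible_L L"
    and "f \<in> C2pi"
    and "n \<ge> 2"
  shows "E_alpha N xs \<alpha> L n n f \<le>
           (1 + alpha_norm N \<alpha> * (IdL_norm L - 1)) / (1 - alpha_norm N \<alpha>)
             * 2 * modcont f (2 * pi * sqrt 3 / (real n + 2))
         + alpha_norm N \<alpha> / (1 - alpha_norm N \<alpha>) * IdL_norm L * supn f"
proof -
  define W where "W = modcont f (2 * pi * sqrt 3 / (real n + 2))"
  define a where "a = alpha_norm N \<alpha>"
  define K where "K = IdL_norm L"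
  have f: "continuous_on {-pi..pi} f" "f (-pi) = f pi" using assms(5) unfolding C2pi_def by auto
  obtain p where p: "p \<in> trig_poly n" and approx: "\<And>x. x \<in> {-pi..pi} \<Longrightarrow> \<bar>f x - p x\<bar> \<le> 2 * W"
    using jackson_trig_approximation[OF f, of n] assms(6) unfolding W_def by auto
  have p_rat: "p \<in> trig_rat n n" using p by (rule trig_poly_in_trig_rat)
  have "a < 1" unfolding a_def using alpha_norm_less_1[OF partition_pi_pos] assms(2,3) by blast
  have "E_alpha N xs \<alpha> L n n f \<le> supn (\<lambda>x. f x - fractal_op N xs \<alpha> L p x)"
    using E_alpha_le_supn[OF assms(2-4) f(1) p_rat] .
  also have "\<dots> \<le> 2 * W + a / (1 - a) * (K * (supn f + 2 * W))"
    unfolding a_def K_def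
    by (rule supn_diff_fractal_op_le[OF assms(2-4) trig_rat_in_C2pi[OF p_rat] f(1) approx])
  also have "\<dots> = (1 + a * (K - 1)) / (1 - a) * 2 * W + a / (1 - a) * K * supn f"
  proof -
    have "(1 + a * (K - 1)) / (1 - a) = 1 + a / (1 - a) * K" using \<open>a < 1\<close> by (simp add: field_simps)
    then show ?thesis by (simp add: algebra_simps)
  qed
  finally show ?thesis unfolding W_def a_def K_def .
qed

end
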